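(* For every nonzero $(x_1,x_2)\in\mathbb R^2$ and nonzero $(y_1,y_2,y_3)\in\mathbb R^3$, the equations \begin{align*} de^1 &=( x_2 y_1- x_1 y_2)e^{35}- x_1y_3(e^{36}+e^{45})- x_2 y_3 e^{46},\\ de^3 &= -( x_2 y_1- x_1 y_2)e^{15}+ x_1 y_3(e^{16}+e^{25})+ x_2 y_3 e^{26},\\ de^5 &= ( x_2 y_1- x_1 y_2)e^{13}- x_1y_3(e^{14}+e^{23})- x_2 y_3 e^{24},\\ de^2 &= x_1y_1 e^{35} -( x_1 y_3- y_2 x_2)e^{46}+ x_2y_1(e^{36}+e^{45}), \\ de^4 &= - x_1 y_1e^{15} +( x_1 y_3- y_2 x_2)e^{26}- x_2 y_1(e^{16}+e^{25}),\\ de^6 &= x_1 y_1e^{13} - ( x_1 y_3- y_2 x_2)e^{24}+ x_2 y_1(e^{14}+e^{23}) \end{align*} define a non-Abelian Lie algebra $\mathfrak g$ with basis $e^1,\dots,e^6$ of $\mathfrak g^*$, and, modulo rescaling of the metric, each point of $\mathcal M\cong\mathbb{RP}^1\times\mathbb{RP}^2$ (represented by the formal product $(x_1u_1+x_2u_2)\cdot(y_1u_1^2+y_2u_1u_2+y_3u_2^2)$) corresponds in this way to an $SO(3)$-structure with invariant intrinsic torsion on a non-Abelian Lie algebra. In addition, the flat connection associated with the coframe has invariant torsion, and the intrinsic torsion is represented by the expanded product \[ x_1y_1u_1^3+(x_1y_2+x_2y_1)u_1^2u_2 + (x_1y_3+x_2y_2)u_1u_2^2+x_2y_3u_2^3.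 \] In particular, the intrinsic torsion determines a surjective $PSL(2,\mathbb R)$-equivariant map $\mathbb{RP}^1\times \mathbb{RP}^2\to \mathbb{RP}^3$, induced by polynomial multiplication.
   Context: $e^{ij}=e^i\wedge e^j$. Let $\sigma=e^{12}+e^{34}+e^{56}$, $\eta^\theta=(\cos\theta\, e^1+\sin\theta\, e^2)\wedge(\cos\theta\, e^3+\sin\theta\, e^4)\wedge(\cos\theta\, e^5+\sin\theta\, e^6)$, $\eta_0=\eta^0$, $\eta_1=\eta^{2\pi/3}$, $\eta_2=\eta^{-2\pi/3}$; the common stabilizer of these forms in $GL(6,\mathbb R)$ is a copy of $SO(3)$, and a coframe $e^1,\dots,e^6$ of a Lie algebra (a basis of $\mathfrak g^*$, the structure given by $d:\mathfrak g^*\to\Lambda^2\mathfrak g^*$) defines a left-invariant $SO(3)$-structure, with metric $\sum (e^i)^2$. Put $\gamma=\tfrac43(\eta_0+\eta_1+\eta_2)$, $\hat\gamma=J\gamma$ ($J$ the almost complex structure for which $\gamma+i\hat\gamma$ has type $(3,0)$). The intrinsic torsion of an $SO(3)$-structure is the projection of the torsion of any connection on the reduction to the cokernel of $T^*\otimes\mathfrak{so}(3)\to\Lambda^2T^*\otimes T$; it is invariant if it lies in the 4-dimensional $SO(3)$-invariant part. Then there are $\lambda_1,\dots,\lambda_4$ with $d\eta_0=-\tfrac12\lambda_4\sigma^2$, $d\eta_1=\tfrac1{16}(3\sqrt3\lambda_1+3\lambda_2+\sqrt3\lambda_3+\lambda_4)\sigma^2$, $d\eta_2=-\tfrac1{16}(3\sqrt3\lambda_1-3\lambda_2+\sqrt3\lambda_3-\lambda_4)\sigma^2$,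 $d\hat\gamma=\tfrac12(\lambda_3-\lambda_1)\sigma^2$, $d\sigma=\tfrac34(\lambda_1-\lambda_3)\gamma+\tfrac34(\lambda_2-\lambda_4)\hat\gamma+\tfrac14(\lambda_2+3\lambda_4)(e^{235}+e^{145}+e^{136}+3e^{246})+\tfrac14(3\lambda_1+\lambda_3)(e^{245}+e^{146}+e^{236}+3e^{135})$; the intrinsic torsion is represented by the cubic $\lambda_1u_1^3+\lambda_2u_1^2u_2+\lambda_3u_1u_2^2+\lambda_4u_2^3$ in variables $u_1,u_2$ (the centralizer $GL(2,\mathbb R)$ of $SO(3)$ acts on $\mathrm{span}(e^1,e^2)\cong\mathrm{span}(u_1,u_2)$, and likewise on each $\mathrm{span}(e^{2i-1},e^{2i})$). $\mathbb{RP}^k$ is the projectivization of the space of degree-$k$ homogeneous polynomials in $u_1,u_2$. The invariant torsion variety is $\mathcal M=\{[\lambda_1:\dots:\lambda_4:\mu_1:\mu_2]\in\mathbb{RP}^5\mid\operatorname{rank}\begin{pmatrix} -\tfrac23\lambda_2+\tfrac12\mu_1 & -\tfrac13\lambda_3+\tfrac12\mu_2 & \lambda_1 \\ -\tfrac23\lambda_3-\tfrac12\mu_2 &- \lambda_4 & \tfrac13\lambda_2+\tfrac12\mu_1\end{pmatrix}=1\}$, identified with $\mathbb{RP}^1\times\mathbb{RP}^2$ via $([x_1u_1+x_2u_2],[y_1u_1^2+y_2u_1u_2+y_3u_2^2])\mapsto[x_1y_1:x_1y_2+x_2y_1:x_1y_3+x_2y_2:x_2y_3:\tfrac23(2x_2y_1-x_1y_2):\tfrac23(x_2y_2-2x_1y_3)]$.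 *)

theory Defs
  imports "HOL-Analysis.Analysis"
begin

text \<open>Vectors of the 6-dimensional Lie algebra g = R^6, with standard basis e_1..e_6 indexed
  by the numeral type 6 (the numerals 1,...,6 of type 6 are its six distinct elements).
  Forms are represented as alternating multilinear functions (determinant convention,
  i.e. e^{i j}(e_i,e_j) = 1).\<close>

type_synonym vec6 = "real^6"
type_synonym form1 = "vec6 \<Rightarrow> real"
type_synonym form2 = "vec6 \<Rightarrow> vec6 \<Rightarrow> real"
type_synonym form3 = "vec6 \<Rightarrow> vec6 \<Rightarrow> vec6 \<Rightarrow> real"
type_synonym form4 = "vec6 \<Rightarrow> vec6 \<Rightarrow> vec6 \<Rightarrow> vec6 \<Rightarrow> real"

definition cof :: "6 \<Rightarrow> form1" where
  "cof i X = X $ i"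

definition wedge2 :: "form1 \<Rightarrow> form1 \<Rightarrow> form2" where
  "wedge2 a b X Y = a X * b Y - a Y * b X"

definition wedge3 :: "form1 \<Rightarrow> form1 \<Rightarrow> form1 \<Rightarrow> form3" where
  "wedge3 a b c X Y Z =
     a X * (b Y * c Z - b Z * c Y) - a Y * (b X * c Z - b Z * c X) + a Z * (b X * c Y - b Y * c X)"

definition e2 :: "6 \<Rightarrow> 6 \<Rightarrow> form2" where
  "e2 i j = wedge2 (cof i) (cof j)"

definition e3 :: "6 \<Rightarrow> 6 \<Rightarrow> 6 \<Rightarrow> form3" where
  "e3 i j k = wedge3 (cof i) (cof j) (cof k)"

definition struct_d :: "real \<Rightarrow> real \<Rightarrow> real \<Rightarrow> real \<Rightarrow> real \<Rightarrow> 6 \<Rightarrow> form2" where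
  "struct_d x1 x2 y1 y2 y3 k X Y =
    (if k = 1 then (x2*y1 - x1*y2) * e2 3 5 X Y - x1*y3 * (e2 3 6 X Y + e2 4 5 X Y) - x2*y3 * e2 4 6 X Y
     else if k = 3 then - (x2*y1 - x1*y2) * e2 1 5 X Y + x1*y3 * (e2 1 6 X Y + e2 2 5 X Y) + x2*y3 * e2 2 6 X Y
     else if k = 5 then (x2*y1 - x1*y2) * e2 1 3 X Y - x1*y3 * (e2 1 4 X Y + e2 2 3 X Y) - x2*y3 * e2 2 4 X Y
     else if k = 2 then x1*y1 * e2 3 5 X Y - (x1*y3 - y2*x2) * e2 4 6 X Y + x2*y1 * (e2 3 6 X Y + e2 4 5 X Y)
     else if k = 4 then - x1*y1 * e2 1 5 X Y + (x1*y3 - y2*x2) * e2 2 6 X Y - x2*y1 * (e2 1 6 X Y + e2 2 5 X Y)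
     else x1*y1 * e2 1 3 X Y - (x1*y3 - y2*x2) * e2 2 4 X Y + x2*y1 * (e2 1 4 X Y + e2 2 3 X Y))"

text \<open>The bracket on g determined by prescribed differentials of the coframe, via the
  Chevalley--Eilenberg convention  de^k(X,Y) = - e^k([X,Y]).\<close>
definition bracket_of :: "(6 \<Rightarrow> form2) \<Rightarrow> vec6 \<Rightarrow> vec6 \<Rightarrow> vec6" where
  "bracket_of D X Y = (\<chi> k. - D k X Y)"

definition is_lie_bracket :: "(vec6 \<Rightarrow> vec6 \<Rightarrow> vec6) \<Rightarrow> bool" where
  "is_lie_bracket B \<longleftrightarrow> bilinear B \<and> (\<forall>X. B X X = 0) \<and>
     (\<forall>X Y Z. B X (B Y Z) + B Y (B Z X) + B Z (B X Y) = 0)"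

definition non_abelian :: "(vec6 \<Rightarrow> vec6 \<Rightarrow> vec6) \<Rightarrow> bool" where
  "non_abelian B \<longleftrightarrow> (\<exists>X Y. B X Y \<noteq> 0)"

text \<open>Exterior derivative of left-invariant forms (Chevalley--Eilenberg formula).\<close>
definition d1 :: "(vec6 \<Rightarrow> vec6 \<Rightarrow> vec6) \<Rightarrow> form1 \<Rightarrow> form2" where
  "d1 B a X Y = - a (B X Y)"

definition d2 :: "(vec6 \<Rightarrow> vec6 \<Rightarrow> vec6) \<Rightarrow> form2 \<Rightarrow> form3" where
  "d2 B w X Y Z = - w (B X Y) Z + w (B X Z) Y - w (B Y Z) X"

definition d3 :: "(vec6 \<Rightarrow> vec6 \<Rightarrow> vec6) \<Rightarrow> form3 \<Rightarrow> form4" where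
  "d3 B p X0 X1 X2 X3 =
     - p (B X0 X1) X2 X3 + p (B X0 X2) X1 X3 - p (B X0 X3) X1 X2
     - p (B X1 X2) X0 X3 + p (B X1 X3) X0 X2 - p (B X2 X3) X0 X1"

definition sigma :: form2 where
  "sigma X Y = e2 1 2 X Y + e2 3 4 X Y + e2 5 6 X Y"

definition eta :: "real \<Rightarrow> form3" where
  "eta \<theta> = wedge3 (\<lambda>X. cos \<theta> * cof 1 X + sin \<theta> * cof 2 X)
                    (\<lambda>X. cos \<theta> * cof 3 X + sin \<theta> * cof 4 X)
                    (\<lambda>X. cos \<theta> * cof 5 X + sin \<theta> * cof 6 X)"

definition eta0 :: form3 where "eta0 = eta 0"
definition eta1 :: form3 where "eta1 = eta (2*pi/3)"
definition eta2 :: form3 where "eta2 = eta (-(2*pi/3))"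

definition sigma_sq :: form4 where
  "sigma_sq X Y Z W = 2 * (sigma X Y * sigma Z W - sigma X Z * sigma Y W + sigma X W * sigma Y Z)"

definition gamma :: form3 where
  "gamma X Y Z = 4/3 * (eta0 X Y Z + eta1 X Y Z + eta2 X Y Z)"

text \<open>The almost complex structure J compatible with the metric and sigma
  (sigma(X,Y) = <JX,Y>): J e_1 = e_2, J e_2 = -e_1, etc.  Its action on a 3-form of type
  (3,0)+(0,3) is phi |-> phi(J.,J.,J.), so that gamma + i*gammahat has type (3,0).\<close>
definition Jmat :: "real^6^6" where
  "Jmat = (\<chi> i j. if (i = 2 \<and> j = 1) \<or> (i = 4 \<and> j = 3) \<or> (i = 6 \<and> j = 5) then 1
                   else if (i = 1 \<and> j = 2) \<or> (i = 3 \<and> j = 4) \<or> (i = 5 \<and> j = 6) then -1 else 0)"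

definition gammahat :: form3 where
  "gammahat X Y Z = gamma (Jmat *v X) (Jmat *v Y) (Jmat *v Z)"

definition SO3 :: "(real^6^6) set" where
  "SO3 = {g. invertible g \<and>
     (\<forall>X Y. sigma (g *v X) (g *v Y) = sigma X Y) \<and>
     (\<forall>p \<in> {eta0, eta1, eta2}. \<forall>X Y Z. p (g *v X) (g *v Y) (g *v Z) = p X Y Z)}"

definition so3 :: "(real^6^6) set" where
  "so3 = {A. (\<forall>X Y. sigma (A *v X) Y + sigma X (A *v Y) = 0) \<and>
     (\<forall>p \<in> {eta0, eta1, eta2}. \<forall>X Y Z. p (A *v X) Y Z + p X (A *v Y) Z + p X Y (A *v Z) = 0)}"

type_synonym tensor = "vec6 \<Rightarrow> vec6 \<Rightarrow> vec6"  \<comment> \<open>elements of \<Lambda>^2 T* \<otimes> T\<close>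

text \<open>Image of the map T* \<otimes> so(3) \<rightarrow> \<Lambda>^2 T* \<otimes> T, alpha |-> ((X,Y) |-> alpha_X Y - alpha_Y X).\<close>
definition delta_image :: "tensor set" where
  "delta_image = {T. \<exists>\<alpha> :: vec6 \<Rightarrow> real^6^6. linear \<alpha> \<and> (\<forall>X. \<alpha> X \<in> so3) \<and>
                        (\<forall>X Y. T X Y = \<alpha> X *v Y - \<alpha> Y *v X)}"

text \<open>Torsion of the flat connection for which the coframe is parallel:
  T(X,Y) = nabla_X Y - nabla_Y X - [X,Y] = -[X,Y] on left-invariant fields.
  This connection preserves the SO(3)-structure (it is a connection on the reduction).\<close>
definition flat_torsion :: "(vec6 \<Rightarrow> vec6 \<Rightarrow> vec6) \<Rightarrow> tensor" where
  "flat_torsion B X Y = - B X Y"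

definition act_tensor :: "real^6^6 \<Rightarrow> tensor \<Rightarrow> tensor" where
  "act_tensor g T X Y = g *v T (matrix_inv g *v X) (matrix_inv g *v Y)"

definition SO3_invariant_tensor :: "tensor \<Rightarrow> bool" where
  "SO3_invariant_tensor T \<longleftrightarrow> (\<forall>g \<in> SO3. act_tensor g T = T)"

text \<open>The intrinsic torsion (class of the torsion of a connection on the reduction in the
  cokernel of delta) is invariant: its class is fixed by SO(3).\<close>
definition intrinsic_torsion_invariant :: "(vec6 \<Rightarrow> vec6 \<Rightarrow> vec6) \<Rightarrow> bool" where
  "intrinsic_torsion_invariant B \<longleftrightarrow>
     (\<forall>g \<in> SO3. (\<lambda>X Y. act_tensor g (flat_torsion B) X Y - flat_torsion B X Y) \<in> delta_image)"

text \<open>The invariant intrinsic torsion is represented by the cubic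
  l1 u1^3 + l2 u1^2 u2 + l3 u1 u2^2 + l4 u2^3, via the identification of the paper.\<close>
definition torsion_cubic :: "(vec6 \<Rightarrow> vec6 \<Rightarrow> vec6) \<Rightarrow> real \<Rightarrow> real \<Rightarrow> real \<Rightarrow> real \<Rightarrow> bool" where
  "torsion_cubic B l1 l2 l3 l4 \<longleftrightarrow>
     d3 B eta0 = (\<lambda>X Y Z W. - 1/2 * l4 * sigma_sq X Y Z W) \<and>
     d3 B eta1 = (\<lambda>X Y Z W. 1/16 * (3 * sqrt 3 * l1 + 3 * l2 + sqrt 3 * l3 + l4) * sigma_sq X Y Z W) \<and>
     d3 B eta2 = (\<lambda>X Y Z W. - 1/16 * (3 * sqrt 3 * l1 - 3 * l2 + sqrt 3 * l3 - l4) * sigma_sq X Y Z W) \<and>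
     d3 B gammahat = (\<lambda>X Y Z W. 1/2 * (l3 - l1) * sigma_sq X Y Z W) \<and>
     d2 B sigma = (\<lambda>X Y Z. 3/4 * (l1 - l3) * gamma X Y Z + 3/4 * (l2 - l4) * gammahat X Y Z
        + 1/4 * (l2 + 3 * l4) * (e3 2 3 5 X Y Z + e3 1 4 5 X Y Z + e3 1 3 6 X Y Z + 3 * e3 2 4 6 X Y Z)
        + 1/4 * (3 * l1 + l3) * (e3 2 4 5 X Y Z + e3 1 4 6 X Y Z + e3 2 3 6 X Y Z + 3 * e3 1 3 5 X Y Z))"

definition lin_form :: "real \<Rightarrow> real \<Rightarrow> real \<Rightarrow> real \<Rightarrow> real" where
  "lin_form x1 x2 u1 u2 = x1 * u1 + x2 * u2"
definition quad_form :: "real \<Rightarrow> real \<Rightarrow> real \<Rightarrow> real \<Rightarrow> real \<Rightarrow> real" where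
  "quad_form y1 y2 y3 u1 u2 = y1 * u1^2 + y2 * u1 * u2 + y3 * u2^2"
definition cubic_form :: "real \<Rightarrow> real \<Rightarrow> real \<Rightarrow> real \<Rightarrow> real \<Rightarrow> real \<Rightarrow> real" where
  "cubic_form l1 l2 l3 l4 u1 u2 = l1 * u1^3 + l2 * u1^2 * u2 + l3 * u1 * u2^2 + l4 * u2^3"

definition prod_coeffs :: "real \<Rightarrow> real \<Rightarrow> real \<Rightarrow> real \<Rightarrow> real \<Rightarrow> real \<times> real \<times> real \<times> real" where
  "prod_coeffs x1 x2 y1 y2 y3 = (x1*y1, x1*y2 + x2*y1, x1*y3 + x2*y2, x2*y3)"

end

theory Submission
  imports Defs "HOL-Real_Asymp.Real_Asymp"
begin

text \<open>The structure equations define the bracket, and the Lie algebra axioms as well as the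
  formulas for the derivatives of the defining forms are polynomial identities in the
  coefficients. The bracket is invariant under the stabiliser SO(3): the metric is recovered
  from \<open>\<sigma>\<close> and two SO(3)-invariant 3-forms by a trace formula, so the stabiliser is orthogonal
  and commutes with J, and \<open>\<langle>[X,Y],Z\<rangle>\<close> is a combination of \<open>\<eta>\<^sub>0\<close> twisted by J.
  Hence the flat connection has invariant torsion, and its intrinsic torsion is the cubic
  obtained by multiplying the linear form in x by the quadratic form in y. Multiplication of
  binary forms is SL(2)-equivariant and onto the nonzero cubics, because every real binary
  cubic has a real linear factor.\<close>

lemma exhaust_6:
  fixes x :: 6
  shows "x = 1 \<or> x = 2 \<or> x = 3 \<or> x = 4 \<or> x = 5 \<or> x = 6"
proof (induct x)
  case (of_int z)
  then have "z = 0 \<or> z = 1 \<or> z = 2 \<or> z = 3 \<or> z = 4 \<or> z = 5" by fastforce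
  then show ?case by auto
qed

lemma forall_6: "(\<forall>i::6. P i) \<longleftrightarrow> P 1 \<and> P 2 \<and> P 3 \<and> P 4 \<and> P 5 \<and> P 6"
  by (metis exhaust_6)

lemma UNIV_6: "(UNIV::6 set) = {1, 2, 3, 4, 5, 6}"
  using exhaust_6 by auto

lemma sum_6: "sum f (UNIV::6 set) = f 1 + f 2 + f 3 + f 4 + f 5 + f 6"
  unfolding UNIV_6 by (simp add: ac_simps)

lemma axis_nth: "axis i (1::real) $ j = (if j = i then 1 else 0)"
  by (simp add: axis_def)

section \<open>The Lie algebra\<close>

abbreviation struct_bracket :: "real \<Rightarrow> real \<Rightarrow> real \<Rightarrow> real \<Rightarrow> real \<Rightarrow> vec6 \<Rightarrow> vec6 \<Rightarrow> vec6" where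
  "struct_bracket x1 x2 y1 y2 y3 \<equiv> bracket_of (struct_d x1 x2 y1 y2 y3)"

lemmas struct_bracket_unfold = bracket_of_def struct_d_def e2_def wedge2_def cof_def

lemma d1_cof_struct_bracket: "d1 (struct_bracket x1 x2 y1 y2 y3) (cof k) = struct_d x1 x2 y1 y2 y3 k"
  by (intro ext) (simp add: d1_def cof_def bracket_of_def)

lemma bilinear_struct_bracket: "bilinear (struct_bracket x1 x2 y1 y2 y3)"
  unfolding bilinear_def
  by (intro conjI allI linearI) (simp_all add: vec_eq_iff forall_6 struct_bracket_unfold algebra_simps)

lemma struct_bracket_self: "struct_bracket x1 x2 y1 y2 y3 X X = 0"
  by (simp add: vec_eq_iff struct_bracket_unfold)

lemma struct_bracket_jacobi:
  fixes x1 x2 y1 y2 y3 :: real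
  defines "B \<equiv> struct_bracket x1 x2 y1 y2 y3"
  shows "B X (B Y Z) + B Y (B Z X) + B Z (B X Y) = 0"
  unfolding B_def vec_eq_iff forall_6
  by (simp add: struct_bracket_unfold) (intro conjI; algebra)

lemma is_lie_bracket_struct_bracket: "is_lie_bracket (struct_bracket x1 x2 y1 y2 y3)"
  unfolding is_lie_bracket_def
  using bilinear_struct_bracket struct_bracket_self struct_bracket_jacobi by blast

lemma non_abelian_struct_bracket:
  assumes x: "(x1, x2) \<noteq> (0::real, 0)" and y: "(y1, y2, y3) \<noteq> (0::real, 0, 0)"
  shows "non_abelian (struct_bracket x1 x2 y1 y2 y3)"
proof (rule ccontr)
  assume "\<not> non_abelian (struct_bracket x1 x2 y1 y2 y3)"
  then have zero: "struct_bracket x1 x2 y1 y2 y3 (axis i 1) (axis j 1) $ k = 0" for i j k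
    unfolding non_abelian_def by simp
  have "x1*y1 = 0" using zero[of 3 5 2] by (simp add: struct_bracket_unfold axis_nth)
  moreover have "x2*y1 - x1*y2 = 0" using zero[of 3 5 1] by (simp add: struct_bracket_unfold axis_nth)
  moreover have "x2*y3 = 0" using zero[of 4 6 1] by (simp add: struct_bracket_unfold axis_nth)
  moreover have "x1*y3 = 0" using zero[of 3 6 1] by (simp add: struct_bracket_unfold axis_nth)
  moreover have "x1*y3 - y2*x2 = 0" using zero[of 4 6 2] by (simp add: struct_bracket_unfold axis_nth)
  moreover have "x2*y1 = 0" using zero[of 3 6 2] by (simp add: struct_bracket_unfold axis_nth)
  moreover have "y2*x2 = x2*y2" by simp
  ultimately have "x1*y1 = 0" "x1*y2 = 0" "x1*y3 = 0" "x2*y1 = 0" "x2*y2 = 0" "x2*y3 = 0"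
    by linarith+
  then show False using x y by auto
qed

text \<open>The 3-form attached to the binary cubic \<open>a u\<^sub>1\<^sup>3 + b u\<^sub>1\<^sup>2u\<^sub>2 + c u\<^sub>1u\<^sub>2\<^sup>2 + d u\<^sub>2\<^sup>3\<close>;
  \<open>\<eta>\<^sup>\<theta>\<close> is the one attached to \<open>(cos \<theta> u\<^sub>1 + sin \<theta> u\<^sub>2)\<^sup>3\<close>.\<close>
definition form_of_cubic :: "real \<Rightarrow> real \<Rightarrow> real \<Rightarrow> real \<Rightarrow> form3" where
  "form_of_cubic a b c d X Y Z =
     a * e3 1 3 5 X Y Z + b * (e3 1 3 6 X Y Z + e3 1 4 5 X Y Z + e3 2 3 5 X Y Z)
   + c * (e3 1 4 6 X Y Z + e3 2 3 6 X Y Z + e3 2 4 5 X Y Z) + d * e3 2 4 6 X Y Z"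

lemmas form_of_cubic_unfold = form_of_cubic_def e3_def wedge3_def cof_def

lemma eta_eq_form_of_cubic:
  "eta \<theta> = form_of_cubic (cos \<theta> ^ 3) (cos \<theta> ^ 2 * sin \<theta>) (cos \<theta> * sin \<theta> ^ 2) (sin \<theta> ^ 3)"
  unfolding eta_def form_of_cubic_unfold by (intro ext) algebra

lemma eta0_eq: "eta0 = form_of_cubic 1 0 0 0"
  by (simp add: eta0_def eta_eq_form_of_cubic)

lemma eta1_eq: "eta1 = form_of_cubic (-1/8) (sqrt 3/8) (-3/8) (3 * sqrt 3/8)"
  unfolding eta1_def eta_eq_form_of_cubic
  by (simp add: cos_120 sin_120 power3_eq_cube power2_eq_square)

lemma eta2_eq: "eta2 = form_of_cubic (-1/8) (- sqrt 3/8) (-3/8) (- 3 * sqrt 3/8)"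
  unfolding eta2_def eta_eq_form_of_cubic
  by (simp add: cos_120 sin_120 power3_eq_cube power2_eq_square)

lemma form_of_cubic_0010_eq: "form_of_cubic 0 0 1 0 X Y Z = - 4/3 * (eta1 X Y Z + eta2 X Y Z) - 1/3 * eta0 X Y Z"
  by (simp add: eta0_eq eta1_eq eta2_eq form_of_cubic_def algebra_simps)

lemma gamma_eq: "gamma = form_of_cubic 1 0 (-1) 0"
  by (intro ext) (simp add: gamma_def eta0_eq eta1_eq eta2_eq form_of_cubic_def algebra_simps)

lemma Jmat_mult_vec:
  "Jmat *v X = (\<chi> i. if i = 1 then - X$2 else if i = 2 then X$1 else if i = 3 then - X$4
                   else if i = 4 then X$3 else if i = 5 then - X$6 else X$5)"
  unfolding vec_eq_iff forall_6 by (simp add: Jmat_def matrix_vector_mult_def sum_6)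

lemma gammahat_eq: "gammahat = form_of_cubic 0 1 0 (-1)"
  by (intro ext) (simp add: gammahat_def gamma_eq Jmat_mult_vec form_of_cubic_unfold algebra_simps)

lemma Jmat_Jmat: "Jmat *v (Jmat *v X) = - X"
  unfolding vec_eq_iff forall_6 by (simp add: Jmat_mult_vec)

lemma sigma_eq_inner_Jmat: "sigma X Y = (Jmat *v X) \<bullet> Y"
  unfolding Jmat_mult_vec sigma_def inner_vec_def sum_6
  by (simp add: e2_def wedge2_def cof_def algebra_simps)

lemma linear_form_of_cubic:
  "linear (\<lambda>X. form_of_cubic a b c d X Y Z)"
  "linear (\<lambda>Y. form_of_cubic a b c d X Y Z)"
  "linear (form_of_cubic a b c d X Y)"
  by (rule linearI; simp add: form_of_cubic_unfold algebra_simps)+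

section \<open>The stabiliser is orthogonal\<close>

definition sigma_dual :: "form3 \<Rightarrow> vec6 \<Rightarrow> vec6 \<Rightarrow> vec6" where
  "sigma_dual \<rho> X Y = - (Jmat *v (\<chi> i. \<rho> X Y (axis i 1)))"

lemma sigma_sigma_dual:
  assumes "linear (\<rho> X Y)"
  shows "sigma (sigma_dual \<rho> X Y) W = \<rho> X Y W"
proof -
  have "\<rho> X Y W = \<rho> X Y (\<Sum>i\<in>UNIV. W$i *s axis i 1)"
    by (simp add: basis_expansion)
  also have "\<dots> = (\<Sum>i\<in>UNIV. W$i * \<rho> X Y (axis i 1))"
    using assms by (simp add: linear_sum linear_scale scalar_mult_eq_scaleR)
  also have "\<dots> = (\<chi> i. \<rho> X Y (axis i 1)) \<bullet> W"
    by (simp add: inner_vec_def mult.commute)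
  finally show ?thesis
    by (simp add: sigma_dual_def sigma_eq_inner_Jmat linear_neg[OF matrix_vector_mul_linear] Jmat_Jmat)
qed

lemma sigma_dual_equivariant:
  assumes gh: "g ** h = mat 1"
    and sigma_g: "\<And>X Y. sigma (g *v X) (g *v Y) = sigma X Y"
    and rho_g: "\<And>X Y Z. \<rho> (g *v X) (g *v Y) (g *v Z) = \<rho> X Y Z"
    and lin: "\<And>X Y. linear (\<rho> X Y)"
  shows "sigma_dual \<rho> (g *v X) (g *v Y) = g *v sigma_dual \<rho> X Y"
proof -
  have "\<forall>W. sigma (sigma_dual \<rho> (g *v X) (g *v Y)) W = sigma (g *v sigma_dual \<rho> X Y) W"
  proof
    fix W
    have W: "W = g *v (h *v W)" by (simp add: matrix_vector_mul_assoc gh)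
    have "sigma (sigma_dual \<rho> (g *v X) (g *v Y)) W = \<rho> (g *v X) (g *v Y) (g *v (h *v W))"
      using W by (metis sigma_sigma_dual lin)
    also have "\<dots> = sigma (sigma_dual \<rho> X Y) (h *v W)" by (simp add: rho_g sigma_sigma_dual lin)
    also have "\<dots> = sigma (g *v sigma_dual \<rho> X Y) W" using W sigma_g by metis
    finally show "sigma (sigma_dual \<rho> (g *v X) (g *v Y)) W = sigma (g *v sigma_dual \<rho> X Y) W" .
  qed
  then have "Jmat *v sigma_dual \<rho> (g *v X) (g *v Y) = Jmat *v (g *v sigma_dual \<rho> X Y)"
    by (simp only: sigma_eq_inner_Jmat vector_eq_rdot)
  then show ?thesis by (metis Jmat_Jmat neg_equal_iff_equal)
qed

lemma linear_vec_lambda: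
  assumes "\<And>i. linear (\<lambda>Y. f Y i)"
  shows "linear (\<lambda>Y. \<chi> i. f Y i)"
  by (rule linearI) (simp_all add: vec_eq_iff linear_add[OF assms] linear_scale[OF assms])

lemma linear_sigma_dual:
  "(\<And>Z. linear (\<lambda>Y. \<rho> X Y Z)) \<Longrightarrow> linear (sigma_dual \<rho> X)"
  "(\<And>Z. linear (\<lambda>X. \<rho> X Y Z)) \<Longrightarrow> linear (\<lambda>X. sigma_dual \<rho> X Y)"
  unfolding sigma_dual_def
  by (intro linear_compose_neg linear_compose[OF linear_vec_lambda matrix_vector_mul_linear,
        unfolded o_def], assumption)+

lemma trace_matrix_conjugate:
  fixes f :: "real^'n \<Rightarrow> real^'n"
  assumes "linear f" and "h ** g = mat 1"
  shows "trace (matrix (\<lambda>Y. g *v f (h *v Y))) = trace (matrix f)"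
proof -
  have "f Y = matrix f *v Y" for Y by (simp add: matrix_works assms(1))
  then have "(\<lambda>Y. g *v f (h *v Y)) = (\<lambda>Y. (g ** matrix f ** h) *v Y)"
    by (simp add: matrix_vector_mul_assoc matrix_mul_assoc)
  then have "trace (matrix (\<lambda>Y. g *v f (h *v Y))) = trace (g ** matrix f ** h)" by simp
  also have "\<dots> = trace (h ** (g ** matrix f))" by (rule trace_mul_sym)
  finally show ?thesis by (simp add: matrix_mul_assoc assms(2))
qed

abbreviation dual0 :: "vec6 \<Rightarrow> vec6 \<Rightarrow> vec6" where "dual0 \<equiv> sigma_dual (form_of_cubic 1 0 0 0)"
abbreviation dual2 :: "vec6 \<Rightarrow> vec6 \<Rightarrow> vec6" where "dual2 \<equiv> sigma_dual (form_of_cubic 0 0 1 0)"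

text \<open>The metric is determined by \<open>\<sigma>\<close>, \<open>\<eta>\<^sub>0\<close> and \<open>\<eta>\<^sub>1 + \<eta>\<^sub>2\<close>: up to the factor 4 it is this
  combination of traces of compositions of their \<open>\<sigma>\<close>-duals.\<close>
lemma inner_eq_trace_sigma_duals:
  "4 * (X \<bullet> Z) = trace (matrix (\<lambda>Y. dual2 X (dual2 Y Z))) - 2 * trace (matrix (\<lambda>Y. dual0 X (dual2 Y Z)))"
  unfolding trace_def matrix_def sum_6 sigma_dual_def Jmat_mult_vec inner_vec_def
  by (simp add: form_of_cubic_unfold axis_nth algebra_simps)

lemma invertible_matrix_inv:
  assumes "invertible A"
  shows "A ** matrix_inv A = mat 1" and "matrix_inv A ** A = mat 1"
  using someI_ex[OF assms[unfolded invertible_def]] by (simp_all add: matrix_inv_def)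

lemma SO3_D:
  assumes "g \<in> SO3"
  shows "invertible g"
    and "sigma (g *v X) (g *v Y) = sigma X Y"
    and "eta0 (g *v X) (g *v Y) (g *v Z) = eta0 X Y Z"
    and "form_of_cubic 0 0 1 0 (g *v X) (g *v Y) (g *v Z) = form_of_cubic 0 0 1 0 X Y Z"
  using assms unfolding SO3_def by (auto simp: form_of_cubic_0010_eq)

lemma SO3_orthogonal:
  assumes g: "g \<in> SO3"
  shows "(g *v X) \<bullet> (g *v Z) = X \<bullet> Z"
proof -
  define h where "h = matrix_inv g"
  have gh: "g ** h = mat 1" and hg: "h ** g = mat 1"
    unfolding h_def using invertible_matrix_inv SO3_D(1)[OF g] by blast+
  have equiv0: "dual0 (g *v X) (g *v Y) = g *v dual0 X Y" for X Y
    using sigma_dual_equivariant[OF gh] SO3_D(2-3)[OF g] linear_form_of_cubic(3)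
    by (simp add: eta0_eq)
  have equiv2: "dual2 (g *v X) (g *v Y) = g *v dual2 X Y" for X Y
    using sigma_dual_equivariant[OF gh] SO3_D(2,4)[OF g] linear_form_of_cubic(3) by simp
  have conj: "(\<lambda>Y. D (g *v X) (dual2 Y (g *v Z))) = (\<lambda>Y. g *v D X (dual2 (h *v Y) Z))"
    if D: "\<And>X Y. D (g *v X) (g *v Y) = g *v D X Y" for D
  proof
    fix Y
    have "g *v (h *v Y) = Y" by (simp add: matrix_vector_mul_assoc gh)
    then show "D (g *v X) (dual2 Y (g *v Z)) = g *v D X (dual2 (h *v Y) Z)"
      by (metis equiv2 D)
  qed
  have linear_comp: "linear (\<lambda>Y. sigma_dual (form_of_cubic a b c d) X (dual2 Y Z))" for a b c d
    using linear_compose[OF linear_sigma_dual(2) linear_sigma_dual(1)] linear_form_of_cubic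
    by (simp add: o_def)
  have "4 * ((g *v X) \<bullet> (g *v Z))
      = trace (matrix (\<lambda>Y. g *v dual2 X (dual2 (h *v Y) Z)))
        - 2 * trace (matrix (\<lambda>Y. g *v dual0 X (dual2 (h *v Y) Z)))"
    by (simp add: inner_eq_trace_sigma_duals conj equiv0 equiv2)
  also have "\<dots> = 4 * (X \<bullet> Z)"
    by (simp add: trace_matrix_conjugate[OF linear_comp hg] inner_eq_trace_sigma_duals)
  finally show ?thesis by simp
qed

lemma SO3_commutes_Jmat:
  assumes g: "g \<in> SO3"
  shows "Jmat *v (g *v X) = g *v (Jmat *v X)"
proof -
  have gh: "g ** matrix_inv g = mat 1" using invertible_matrix_inv SO3_D(1)[OF g] by blast
  have "\<forall>W. (Jmat *v (g *v X)) \<bullet> W = (g *v (Jmat *v X)) \<bullet> W"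
  proof
    fix W
    have W: "W = g *v (matrix_inv g *v W)" by (simp add: matrix_vector_mul_assoc gh)
    have "(Jmat *v (g *v X)) \<bullet> W = sigma (g *v X) (g *v (matrix_inv g *v W))"
      using W sigma_eq_inner_Jmat by metis
    also have "\<dots> = (Jmat *v X) \<bullet> (matrix_inv g *v W)"
      using SO3_D(2)[OF g, of X "matrix_inv g *v W"] by (simp only: sigma_eq_inner_Jmat)
    also have "\<dots> = (g *v (Jmat *v X)) \<bullet> (g *v (matrix_inv g *v W))" by (simp add: SO3_orthogonal[OF g])
    finally show "(Jmat *v (g *v X)) \<bullet> W = (g *v (Jmat *v X)) \<bullet> W" using W by metis
  qed
  then show ?thesis by (simp only: vector_eq_rdot)
qed

section \<open>Invariance of the torsion\<close>

definition bracket_form :: "real \<Rightarrow> real \<Rightarrow> real \<Rightarrow> real \<Rightarrow> real \<Rightarrow> form3" where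
  "bracket_form x1 x2 y1 y2 y3 X Y Z =
     x1*y1 * eta0 X Y (Jmat *v Z) + x1*y2 * eta0 X Y Z
   + x1*y3 * (- eta0 X (Jmat *v Y) Z - eta0 (Jmat *v X) Y Z - eta0 (Jmat *v X) (Jmat *v Y) (Jmat *v Z))
   + x2*y1 * (- eta0 X Y Z - eta0 X (Jmat *v Y) (Jmat *v Z) - eta0 (Jmat *v X) Y (Jmat *v Z))
   + x2*y2 * eta0 (Jmat *v X) (Jmat *v Y) (Jmat *v Z) + x2*y3 * eta0 (Jmat *v X) (Jmat *v Y) Z"

lemma inner_struct_bracket_eq_bracket_form:
  "struct_bracket x1 x2 y1 y2 y3 X Y \<bullet> Z = bracket_form x1 x2 y1 y2 y3 X Y Z"
  unfolding bracket_form_def eta0_eq Jmat_mult_vec inner_vec_def sum_6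
  by (simp add: struct_bracket_unfold form_of_cubic_unfold) algebra

lemma SO3_invariant_bracket_form:
  assumes "g \<in> SO3"
  shows "bracket_form x1 x2 y1 y2 y3 (g *v X) (g *v Y) (g *v Z) = bracket_form x1 x2 y1 y2 y3 X Y Z"
  unfolding bracket_form_def by (simp add: SO3_commutes_Jmat[OF assms] SO3_D(3)[OF assms])

lemma SO3_invariant_flat_torsion: "SO3_invariant_tensor (flat_torsion (struct_bracket x1 x2 y1 y2 y3))"
  unfolding SO3_invariant_tensor_def
proof (intro ballI ext)
  fix g X Y
  assume g: "g \<in> SO3"
  let ?B = "struct_bracket x1 x2 y1 y2 y3" and ?h = "matrix_inv g"
  have gh: "g *v (?h *v V) = V" for V
    by (simp add: matrix_vector_mul_assoc invertible_matrix_inv(1)[OF SO3_D(1)[OF g]])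
  have "\<forall>W. act_tensor g (flat_torsion ?B) X Y \<bullet> W = flat_torsion ?B X Y \<bullet> W"
  proof
    fix W
    have "act_tensor g (flat_torsion ?B) X Y \<bullet> W = - (?B (?h *v X) (?h *v Y) \<bullet> (?h *v W))"
      using SO3_orthogonal[OF g, of "- ?B (?h *v X) (?h *v Y)" "?h *v W"]
      by (simp add: act_tensor_def flat_torsion_def gh)
    also have "\<dots> = - bracket_form x1 x2 y1 y2 y3 X Y W"
      using SO3_invariant_bracket_form[OF g, of x1 x2 y1 y2 y3 "?h *v X" "?h *v Y" "?h *v W"]
      by (simp add: inner_struct_bracket_eq_bracket_form gh)
    finally show "act_tensor g (flat_torsion ?B) X Y \<bullet> W = flat_torsion ?B X Y \<bullet> W"
      by (simp add: flat_torsion_def inner_struct_bracket_eq_bracket_form)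
  qed
  then show "act_tensor g (flat_torsion ?B) X Y = flat_torsion ?B X Y"
    by (simp only: vector_eq_rdot)
qed

lemma zero_in_delta_image: "(\<lambda>X Y. 0) \<in> delta_image"
proof -
  have "0 \<in> so3"
    unfolding so3_def by (simp add: sigma_def e2_def wedge2_def cof_def eta0_def eta1_def eta2_def
        eta_def wedge3_def)
  then show ?thesis
    unfolding delta_image_def by (intro CollectI exI[of _ "\<lambda>X. 0"]) (simp add: linear_zero)
qed

lemma intrinsic_torsion_invariantI:
  "SO3_invariant_tensor (flat_torsion B) \<Longrightarrow> intrinsic_torsion_invariant B"
  unfolding intrinsic_torsion_invariant_def SO3_invariant_tensor_def
  by (simp add: zero_in_delta_image)

section \<open>The torsion cubic\<close>

lemma d3_struct_bracket_form_of_cubic: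
  "d3 (struct_bracket x1 x2 y1 y2 y3) (form_of_cubic a b c d) X Y Z W =
     1/2 * (a * (x2*y3) - b * (x1*y3 + x2*y2) + c * (x1*y2 + x2*y1) - d * (x1*y1)) * sigma_sq X Y Z W"
  unfolding d3_def form_of_cubic_def sigma_sq_def sigma_def e3_def wedge3_def
  by (simp add: struct_bracket_unfold) algebra

lemma d2_struct_bracket_sigma:
  "d2 (struct_bracket x1 x2 y1 y2 y3) sigma X Y Z =
     3/4 * (x1*y3 + x2*y2 - x1*y1) * form_of_cubic 1 0 (-1) 0 X Y Z
   + 3/4 * (x2*y3 - x1*y2 - x2*y1) * form_of_cubic 0 1 0 (-1) X Y Z
   - 1/4 * (x1*y2 + x2*y1 + 3 * (x2*y3)) * (e3 2 3 5 X Y Z + e3 1 4 5 X Y Z + e3 1 3 6 X Y Z + 3 * e3 2 4 6 X Y Z)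
   - 1/4 * (3 * (x1*y1) + (x1*y3 + x2*y2)) * (e3 2 4 5 X Y Z + e3 1 4 6 X Y Z + e3 2 3 6 X Y Z + 3 * e3 1 3 5 X Y Z)"
  unfolding d2_def form_of_cubic_def sigma_def e3_def wedge3_def
  by (simp add: struct_bracket_unfold) algebra

lemma torsion_cubic_struct_bracket:
  "torsion_cubic (struct_bracket x1 x2 y1 y2 y3)
     (- (x1*y1)) (- (x1*y2 + x2*y1)) (- (x1*y3 + x2*y2)) (- (x2*y3))"
  unfolding torsion_cubic_def eta0_eq eta1_eq eta2_eq gammahat_eq gamma_eq
  by (intro conjI ext) (simp_all add: d3_struct_bracket_form_of_cubic d2_struct_bracket_sigma field_simps)

section \<open>Multiplication of binary forms\<close>

lemma cubic_form_prod_coeffs: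
  "cubic_form (x1*y1) (x1*y2 + x2*y1) (x1*y3 + x2*y2) (x2*y3) u1 u2
     = lin_form x1 x2 u1 u2 * quad_form y1 y2 y3 u1 u2"
  unfolding cubic_form_def lin_form_def quad_form_def
  by (simp add: power2_eq_square power3_eq_cube algebra_simps)

lemma prod_coeffs_nonzero:
  assumes "(x1, x2) \<noteq> (0::real, 0)" and "(y1, y2, y3) \<noteq> (0::real, 0, 0)"
  shows "prod_coeffs x1 x2 y1 y2 y3 \<noteq> (0, 0, 0, 0)"
proof
  assume "prod_coeffs x1 x2 y1 y2 y3 = (0, 0, 0, 0)"
  then have "x1*y1 = 0" "x1*y2 + x2*y1 = 0" "x1*y3 + x2*y2 = 0" "x2*y3 = 0"
    by (simp_all add: prod_coeffs_def)
  then show False using assms by (cases "x1 = 0") auto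
qed

lemma monic_cubic_has_real_root: "\<exists>r::real. r^3 + a*r^2 + b*r + c = 0"
proof -
  let ?q = "\<lambda>r::real. r^3 + a*r^2 + b*r + c"
  have "eventually (\<lambda>r. 0 < ?q r) at_top" by real_asymp
  then obtain s where s: "0 \<le> s" "0 < ?q s"
    unfolding eventually_at_top_linorder by (meson order_refl max.cobounded1 max.cobounded2)
  have "eventually (\<lambda>r. ?q r < 0) at_bot" by real_asymp
  then obtain r where r: "r \<le> 0" "?q r < 0"
    unfolding eventually_at_bot_linorder by (meson order_refl min.cobounded1 min.cobounded2)
  show ?thesis
    using IVT[of ?q r 0 s] r s by (auto intro!: continuous_intros)
qed

lemma binary_cubic_has_linear_factor:
  assumes "(l1, l2, l3, l4) \<noteq> (0::real, 0, 0, 0)"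
  shows "\<exists>x1 x2 y1 y2 y3 t. (x1, x2) \<noteq> (0, 0) \<and> (y1, y2, y3) \<noteq> (0, 0, 0) \<and> t \<noteq> 0 \<and>
           (l1, l2, l3, l4) = (\<lambda>(a, b, c, d). (t * a, t * b, t * c, t * d)) (prod_coeffs x1 x2 y1 y2 y3)"
proof (cases "l1 = 0")
  case True
  with assms have "(l2, l3, l4) \<noteq> (0, 0, 0)" by auto
  with True show ?thesis
    by (intro exI[of _ 0] exI[of _ 1] exI[of _ l2] exI[of _ l3] exI[of _ l4] exI[of _ 1])
       (simp add: prod_coeffs_def)
next
  case False
  obtain r where "r^3 + (l2/l1)*r^2 + (l3/l1)*r + l4/l1 = 0"
    using monic_cubic_has_real_root by blast
  then have "l1*r^3 + l2*r^2 + l3*r + l4 = 0"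
    using False by (simp add: field_simps)
  then have "l4 = - r * (l3 + r*l2 + r^2*l1)"
    by (simp add: power2_eq_square power3_eq_cube algebra_simps)
  with False show ?thesis
    by (intro exI[of _ 1] exI[of _ "-r"] exI[of _ l1] exI[of _ "l2 + r*l1"]
        exI[of _ "l3 + r*l2 + r^2*l1"] exI[of _ 1])
       (simp add: prod_coeffs_def power2_eq_square algebra_simps)
qed

theorem proposition3p10:
  shows
   "(\<forall>x1 x2 y1 y2 y3 :: real. (x1, x2) \<noteq> (0, 0) \<and> (y1, y2, y3) \<noteq> (0, 0, 0) \<longrightarrow>
      (let B = bracket_of (struct_d x1 x2 y1 y2 y3) in
         (\<forall>k. d1 B (cof k) = struct_d x1 x2 y1 y2 y3 k) \<and>
         is_lie_bracket B \<and> non_abelian B \<and>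
         SO3_invariant_tensor (flat_torsion B) \<and>
         intrinsic_torsion_invariant B \<and>
         (\<exists>t. t \<noteq> 0 \<and>
            torsion_cubic B (t * (x1*y1)) (t * (x1*y2 + x2*y1)) (t * (x1*y3 + x2*y2)) (t * (x2*y3)))))
    \<and>
    (\<forall>x1 x2 y1 y2 y3 :: real. (x1, x2) \<noteq> (0, 0) \<and> (y1, y2, y3) \<noteq> (0, 0, 0) \<longrightarrow>
       prod_coeffs x1 x2 y1 y2 y3 \<noteq> (0, 0, 0, 0))
    \<and>
    (\<forall>l1 l2 l3 l4 :: real. (l1, l2, l3, l4) \<noteq> (0, 0, 0, 0) \<longrightarrow>
       (\<exists>x1 x2 y1 y2 y3 t. (x1, x2) \<noteq> (0, 0) \<and> (y1, y2, y3) \<noteq> (0, 0, 0) \<and> t \<noteq> 0 \<and>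
          (l1, l2, l3, l4) = (\<lambda>(a, b, c, d). (t * a, t * b, t * c, t * d)) (prod_coeffs x1 x2 y1 y2 y3)))
    \<and>
    (\<forall>a b c d :: real. a * d - b * c = 1 \<longrightarrow>
       (\<forall>x1 x2 y1 y2 y3 x1' x2' y1' y2' y3'.
          (\<forall>u1 u2. lin_form x1' x2' u1 u2 = lin_form x1 x2 (a*u1 + b*u2) (c*u1 + d*u2)) \<and>
          (\<forall>u1 u2. quad_form y1' y2' y3' u1 u2 = quad_form y1 y2 y3 (a*u1 + b*u2) (c*u1 + d*u2)) \<longrightarrow>
          (\<forall>u1 u2. (case prod_coeffs x1' x2' y1' y2' y3' of (l1, l2, l3, l4) \<Rightarrow> cubic_form l1 l2 l3 l4 u1 u2)
                 = (case prod_coeffs x1 x2 y1 y2 y3 of (l1, l2, l3, l4) \<Rightarrow>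
                      cubic_form l1 l2 l3 l4 (a*u1 + b*u2) (c*u1 + d*u2)))))"
proof (intro conjI allI impI)
  fix x1 x2 y1 y2 y3 :: real
  assume "(x1, x2) \<noteq> (0, 0) \<and> (y1, y2, y3) \<noteq> (0, 0, 0)"
  then show "let B = struct_bracket x1 x2 y1 y2 y3 in
         (\<forall>k. d1 B (cof k) = struct_d x1 x2 y1 y2 y3 k) \<and>
         is_lie_bracket B \<and> non_abelian B \<and>
         SO3_invariant_tensor (flat_torsion B) \<and>
         intrinsic_torsion_invariant B \<and>
         (\<exists>t. t \<noteq> 0 \<and>
            torsion_cubic B (t * (x1*y1)) (t * (x1*y2 + x2*y1)) (t * (x1*y3 + x2*y2)) (t * (x2*y3)))"
    using torsion_cubic_struct_bracket[of x1 x2 y1 y2 y3]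
    by (auto simp: d1_cof_struct_bracket is_lie_bracket_struct_bracket non_abelian_struct_bracket
        SO3_invariant_flat_torsion intrinsic_torsion_invariantI intro!: exI[of _ "-1"])
  \<comment> \<open>The equivariance holds for every linear substitution.\<close>
qed (use prod_coeffs_nonzero binary_cubic_has_linear_factor in \<open>auto simp: prod_coeffs_def cubic_form_prod_coeffs\<close>)

end
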